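(* Let $G=(V,E)$ be a comparability graph. Then the vertices of the graphical zonotope $\mathcal Z_G=\sum_{\{i,j\}\in E}[e_i-e_j,\,e_j-e_i]$ having maximal Euclidean distance to the origin are precisely those corresponding to the transitive orientations of $E$; that is, among all acyclic orientations $O$ of $E$, the Euclidean norm of the point $(\mathrm{outdeg}_O(v)-\mathrm{indeg}_O(v))_{v\in V}$ is maximized exactly when $O$ is transitive. These are the orientations whose induced posets have the maximal number $\varepsilon(G)$ of linear extensions.
   Context: A comparability graph is a simple undirected graph $G=(V,E)$ for which there is a partial order on $V$ under which two distinct vertices are comparable iff they are adjacent. An acyclic orientation of $E$ induces a partial order on $V$ ($u<v$ iff there is a directed path from $u$ to $v$); it is a transitive orientation if the comparability graph of this induced poset equals $G$. The vertices of $\mathcal Z_G$ correspond bijectively to acyclic orientations $O$ of $E$, the vertex corresponding to $O$ being $(\mathrm{outdeg}_O(v)-\mathrm{indeg}_O(v))_{v\in V}$. $\varepsilon(G)$ denotes the maximum over acyclic orientations of $E$ of the number of linear extensions (order-preserving bijections onto $[|V|]$) of the induced poset. *)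

theory Defs
  imports Complex_Main "HOL-Library.FuncSet"
begin

definition simple_graph :: "'a set \<Rightarrow> 'a set set \<Rightarrow> bool" where
  "simple_graph V E \<longleftrightarrow> finite V \<and>
     (\<forall>e\<in>E. \<exists>u v. e = {u, v} \<and> u \<noteq> v \<and> u \<in> V \<and> v \<in> V)"

definition comparability_graph :: "'a set \<Rightarrow> 'a set set \<Rightarrow> bool" where
  "comparability_graph V E \<longleftrightarrow> simple_graph V E \<and>
     (\<exists>R :: ('a \<times> 'a) set. R \<subseteq> V \<times> V \<and> irrefl R \<and> trans R \<and>
        (\<forall>u\<in>V. \<forall>v\<in>V. u \<noteq> v \<longrightarrow> ({u, v} \<in> E \<longleftrightarrow> (u, v) \<in> R \<or> (v, u) \<in> R)))"

definition orientation :: "'a set set \<Rightarrow> ('a \<times> 'a) set \<Rightarrow> bool" where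
  "orientation E Or \<longleftrightarrow> (\<forall>(u, v)\<in>Or. {u, v} \<in> E \<and> u \<noteq> v) \<and>
     (\<forall>u v. {u, v} \<in> E \<and> u \<noteq> v \<longrightarrow> ((u, v) \<in> Or \<longleftrightarrow> (v, u) \<notin> Or))"

definition acyclic_orientation :: "'a set set \<Rightarrow> ('a \<times> 'a) set \<Rightarrow> bool" where
  "acyclic_orientation E Or \<longleftrightarrow> orientation E Or \<and> acyclic Or"

definition induced_less :: "('a \<times> 'a) set \<Rightarrow> ('a \<times> 'a) set" where
  "induced_less Or = Or\<^sup>+"

definition transitive_orientation :: "'a set set \<Rightarrow> ('a \<times> 'a) set \<Rightarrow> bool" where
  "transitive_orientation E Or \<longleftrightarrow> acyclic_orientation E Or \<and>
     {{u, v} | u v. (u, v) \<in> induced_less Or} = E"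

text \<open>The vertex of the graphical zonotope corresponding to Or: (outdeg - indeg)_v.\<close>
definition zvertex :: "('a \<times> 'a) set \<Rightarrow> 'a \<Rightarrow> int" where
  "zvertex Or v = int (card {w. (v, w) \<in> Or}) - int (card {w. (w, v) \<in> Or})"

definition znorm :: "'a set \<Rightarrow> ('a \<times> 'a) set \<Rightarrow> real" where
  "znorm V Or = sqrt (\<Sum>v\<in>V. (real_of_int (zvertex Or v))\<^sup>2)"

definition linear_extensions :: "'a set \<Rightarrow> ('a \<times> 'a) set \<Rightarrow> ('a \<Rightarrow> nat) set" where
  "linear_extensions V Or = {f \<in> V \<rightarrow>\<^sub>E {1..card V}. bij_betw f V {1..card V} \<and>
      (\<forall>u v. (u, v) \<in> induced_less Or \<longrightarrow> f u < f v)}"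

definition num_linext :: "'a set \<Rightarrow> ('a \<times> 'a) set \<Rightarrow> nat" where
  "num_linext V Or = card (linear_extensions V Or)"

definition eps :: "'a set \<Rightarrow> 'a set set \<Rightarrow> nat" where
  "eps V E = Max {num_linext V Or | Or. acyclic_orientation E Or}"

end

theory Submission
  imports Defs "HOL-Library.Infinite_Set"
begin

(*
  Writing in(v), out(v) for in- and out-degrees,
  (out(v) - in(v))^2 = deg(v)^2 - 4 in(v) out(v), and the sum over v of in(v) out(v) counts the
  directed 2-paths w -> v -> w'.  Those whose ends are adjacent ("closed wedges") correspond to
  the triangles of G, whatever the acyclic orientation; the others ("open wedges") are exactly
  the obstructions to transitivity.  So the squared norm is a constant minus four times the
  number of open wedges; it is maximal exactly when there are none, i.e. for transitive
  orientations.

  If every pair comparable in a strict order Q is comparable in P, then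
  e(P) <= e(Q), strictly if some P-comparable pair is Q-incomparable.  Following Stanley, the
  number of strict order-preserving maps V -> [k] equals the number of lattice points of the
  k-dilated chain polytope (transfer map), and the chain polytope of P lies inside that of Q.
  Sandwiching the number of strict maps between e(P) (k choose n) and e(P) (k+n-1 choose n)
  and letting k = 2nt grow compares the leading coefficients e/n!; for strictness an explicit
  box of t^n lattice points lies in Q's polytope but not in P's.  Applied to P = Or^+ and a
  transitive orientation Q of G (which exists since G is a comparability graph), this shows
  that transitive orientations are exactly the maximizers of e.
*)

text \<open>The rank of x in V with respect to a key h is the number of elements with a smaller
  key; for an injective key it numbers V by \<open>0, ..., card V - 1\<close> in increasing key order.\<close>
definition rank :: "'a set \<Rightarrow> ('a \<Rightarrow> nat) \<Rightarrow> 'a \<Rightarrow> nat" where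
  "rank V h x = card {y \<in> V. h y < h x}"

lemma rank_strict_mono:
  assumes "finite V" "x \<in> V" "y \<in> V" "h x < h y"
  shows "rank V h x < rank V h y"
proof -
  have "{z \<in> V. h z < h x} \<subset> {z \<in> V. h z < h y}" using assms by auto
  then show ?thesis unfolding rank_def using assms(1) by (intro psubset_card_mono) auto
qed

lemma rank_less_iff:
  assumes "finite V" "inj_on h V" "x \<in> V" "y \<in> V"
  shows "rank V h x < rank V h y \<longleftrightarrow> h x < h y"
proof
  assume "rank V h x < rank V h y"
  moreover have "h x \<noteq> h y" using calculation assms(2-4) inj_on_eq_iff by fastforce
  ultimately show "h x < h y"
    using rank_strict_mono[OF assms(1,4,3), of h] by (meson less_asym linorder_neqE_nat)
qed (rule rank_strict_mono[OF assms(1,3,4)])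

lemma rank_inj:
  assumes "finite V" "inj_on h V"
  shows "inj_on (rank V h) V"
proof (rule inj_onI)
  fix x y assume "x \<in> V" "y \<in> V" "rank V h x = rank V h y"
  then show "x = y"
    using rank_less_iff[OF assms] assms(2) by (metis inj_on_eq_iff less_irrefl linorder_neqE_nat)
qed

lemma rank_bij:
  assumes "finite V" "inj_on h V"
  shows "bij_betw (\<lambda>x. rank V h x + 1) V {1..card V}"
proof -
  have inj: "inj_on (\<lambda>x. rank V h x + 1) V"
    using rank_inj[OF assms] by (auto simp: inj_on_def)
  have "rank V h x < card V" if "x \<in> V" for x
    unfolding rank_def using assms(1) that by (intro psubset_card_mono) auto
  then have sub: "(\<lambda>x. rank V h x + 1) ` V \<subseteq> {1..card V}" by fastforce
  have "card ((\<lambda>x. rank V h x + 1) ` V) = card {1..card V}" using card_image[OF inj] by simp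
  then have "(\<lambda>x. rank V h x + 1) ` V = {1..card V}"
    using sub by (intro card_subset_eq) auto
  then show ?thesis using inj unfolding bij_betw_def by auto
qed

lemma rank_image:
  assumes "finite V" "inj_on g V" "x \<in> V"
    and iff: "\<And>y. y \<in> V \<Longrightarrow> g y < g x \<longleftrightarrow> h y < h x"
  shows "rank (g ` V) id (g x) = rank V h x"
proof -
  have "{a \<in> g ` V. id a < id (g x)} = g ` {y \<in> V. h y < h x}" using iff by auto
  then show ?thesis unfolding rank_def
    by (simp add: card_image inj_on_subset[OF assms(2)])
qed

text \<open>Ranking V by the values of f, ties broken by a fixed numbering \<open>\<tau>\<close> of V.  This turns
  any map into a linear order compatible with it; it drives the upper counting bound.\<close>
definition tiebreak_rank :: "'a set \<Rightarrow> ('a \<Rightarrow> nat) \<Rightarrow> ('a \<Rightarrow> nat) \<Rightarrow> 'a \<Rightarrow> nat" where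
  "tiebreak_rank V \<tau> f = rank V (\<lambda>x. f x * card V + \<tau> x)"

context
  fixes V :: "'a set" and \<tau> :: "'a \<Rightarrow> nat"
  assumes finV: "finite V" and tau: "bij_betw \<tau> V {..<card V}"
begin

private abbreviation key :: "('a \<Rightarrow> nat) \<Rightarrow> 'a \<Rightarrow> nat" where
  "key f x \<equiv> f x * card V + \<tau> x"

private lemma key_less:
  assumes "x \<in> V" "f x < f y"
  shows "key f x < key f y"
proof -
  have "\<tau> x < card V" using tau assms(1) unfolding bij_betw_def by auto
  then have "key f x < (f x + 1) * card V" by simp
  also have "\<dots> \<le> f y * card V" using assms(2) by (intro mult_right_mono) auto
  finally show ?thesis by simp
qed

private lemma key_inj: "inj_on (key f) V"
proof (rule inj_onI)
  fix x y assume xy: "x \<in> V" "y \<in> V" "key f x = key f y"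
  have "\<tau> x < card V" "\<tau> y < card V" using tau xy(1,2) unfolding bij_betw_def by auto
  then have "key f x mod card V = \<tau> x" "key f y mod card V = \<tau> y" by simp_all
  then have "\<tau> x = \<tau> y" using xy(3) by simp
  then show "x = y" using tau xy(1,2) unfolding bij_betw_def by (meson inj_onD)
qed

private lemma tiebreak_rank_less_iff:
  assumes "x \<in> V" "y \<in> V"
  shows "tiebreak_rank V \<tau> f x < tiebreak_rank V \<tau> f y \<longleftrightarrow> key f x < key f y"
  unfolding tiebreak_rank_def using rank_less_iff[OF finV key_inj assms] .

lemma tiebreak_rank_strict_mono:
  "x \<in> V \<Longrightarrow> y \<in> V \<Longrightarrow> f x < f y \<Longrightarrow> tiebreak_rank V \<tau> f x < tiebreak_rank V \<tau> f y"
  using tiebreak_rank_less_iff key_less by blast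

lemma tiebreak_rank_mono_inv:
  "x \<in> V \<Longrightarrow> y \<in> V \<Longrightarrow> tiebreak_rank V \<tau> f x < tiebreak_rank V \<tau> f y \<Longrightarrow> f x \<le> f y"
  using tiebreak_rank_less_iff key_less by (meson less_asym not_le)

lemma tiebreak_rank_bij: "bij_betw (\<lambda>x. tiebreak_rank V \<tau> f x + 1) V {1..card V}"
  unfolding tiebreak_rank_def using rank_bij[OF finV key_inj] .

lemma tiebreak_rank_less_card:
  assumes "x \<in> V"
  shows "tiebreak_rank V \<tau> f x < card V"
proof -
  have "tiebreak_rank V \<tau> f x + 1 \<in> {1..card V}"
    using bij_betwE[OF tiebreak_rank_bij[of f]] assms by blast
  then show ?thesis by simp
qed

lemma tiebreak_rank_inj: "inj_on (tiebreak_rank V \<tau> f) V"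
  using tiebreak_rank_bij[of f] unfolding bij_betw_def inj_on_def by simp

lemma tiebreak_shift_less_iff:
  assumes "x \<in> V" "y \<in> V"
  shows "f x + tiebreak_rank V \<tau> f x < f y + tiebreak_rank V \<tau> f y
           \<longleftrightarrow> tiebreak_rank V \<tau> f x < tiebreak_rank V \<tau> f y"
    (is "?s x < ?s y \<longleftrightarrow> ?r x < ?r y")
proof
  assume less: "?s x < ?s y"
  show "?r x < ?r y"
  proof (rule ccontr)
    assume "\<not> ?r x < ?r y"
    then consider "?r y < ?r x" | "?r y = ?r x" by linarith
    then show False
    proof cases
      case 1
      then show False using less tiebreak_rank_mono_inv[OF assms(2,1) 1] by linarith
    next
      case 2
      then have "y = x" using tiebreak_rank_inj assms by (metis inj_onD)
      then show False using less by simp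
    qed
  qed
next
  assume "?r x < ?r y"
  moreover have "f x \<le> f y" using tiebreak_rank_mono_inv[OF assms] calculation .
  ultimately show "?s x < ?s y" by linarith
qed

lemma tiebreak_shift_inj: "inj_on (\<lambda>x. f x + tiebreak_rank V \<tau> f x) V"
proof (rule inj_onI)
  fix x y assume xy: "x \<in> V" "y \<in> V" "f x + tiebreak_rank V \<tau> f x = f y + tiebreak_rank V \<tau> f y"
  then have "\<not> tiebreak_rank V \<tau> f x < tiebreak_rank V \<tau> f y"
    "\<not> tiebreak_rank V \<tau> f y < tiebreak_rank V \<tau> f x"
    using tiebreak_shift_less_iff[OF xy(1,2), of f] tiebreak_shift_less_iff[OF xy(2,1), of f] by auto
  then have "tiebreak_rank V \<tau> f x = tiebreak_rank V \<tau> f y" by linarith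
  then show "x = y" using xy(1,2) by (rule inj_onD[OF tiebreak_rank_inj])
qed

lemma tiebreak_shift_determines:
  assumes ranks: "\<And>x. x \<in> V \<Longrightarrow> tiebreak_rank V \<tau> f x = tiebreak_rank V \<tau> g x"
    and images: "(\<lambda>x. f x + tiebreak_rank V \<tau> f x) ` V = (\<lambda>x. g x + tiebreak_rank V \<tau> g x) ` V"
    and x: "x \<in> V"
  shows "f x = g x"
proof -
  define A where "A = (\<lambda>x. f x + tiebreak_rank V \<tau> f x) ` V"
  have rank_shift: "rank A id (h x + tiebreak_rank V \<tau> h x) = rank V (tiebreak_rank V \<tau> h) x"
    if "(\<lambda>x. h x + tiebreak_rank V \<tau> h x) ` V = A" for h
    unfolding that[symmetric] using tiebreak_shift_less_iff[OF _ x]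
    by (intro rank_image[OF finV tiebreak_shift_inj x])
  have "rank V (tiebreak_rank V \<tau> f) x = rank V (tiebreak_rank V \<tau> g) x"
    unfolding rank_def using ranks x by (intro arg_cong[where f = card]) auto
  then have "rank A id (f x + tiebreak_rank V \<tau> f x) = rank A id (g x + tiebreak_rank V \<tau> g x)"
    using rank_shift[of f] rank_shift[of g] images unfolding A_def by simp
  moreover have "f x + tiebreak_rank V \<tau> f x \<in> A" "g x + tiebreak_rank V \<tau> g x \<in> A"
    using x images unfolding A_def by auto
  moreover have "finite A" unfolding A_def using finV by simp
  ultimately have "f x + tiebreak_rank V \<tau> f x = g x + tiebreak_rank V \<tau> g x"
    using rank_inj[of A id] by (auto simp: inj_on_def)
  then show ?thesis using ranks[OF x] by simp
qed

end

locale finite_strict_order =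
  fixes V :: "'a set" and P :: "('a \<times> 'a) set"
  assumes finite_V: "finite V" and P_on_V: "P \<subseteq> V \<times> V"
    and irrefl_P: "irrefl P" and trans_P: "trans P"
begin

lemma P_irrefl: "(x, x) \<notin> P"
  using irrefl_P by (simp add: irrefl_def)

lemma P_trans: "(x, y) \<in> P \<Longrightarrow> (y, z) \<in> P \<Longrightarrow> (x, z) \<in> P"
  using trans_P by (rule transD)

lemma finite_below: "finite {y. (y, x) \<in> P}"
  using P_on_V by (intro finite_subset[OF _ finite_V]) auto

definition chain :: "'a set \<Rightarrow> bool" where
  "chain C \<longleftrightarrow> (\<forall>x\<in>C. \<forall>y\<in>C. x \<noteq> y \<longrightarrow> (x, y) \<in> P \<or> (y, x) \<in> P)"

lemma chain_subset: "chain C \<Longrightarrow> D \<subseteq> C \<Longrightarrow> chain D"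
  unfolding chain_def by blast

lemma chain_top:
  assumes "finite C" "C \<noteq> {}" "chain C"
  shows "\<exists>m\<in>C. \<forall>y\<in>C. y = m \<or> (y, m) \<in> P"
  using assms
proof (induction C rule: finite_ne_induct)
  case (insert x F)
  obtain m where m: "m \<in> F" "\<forall>y\<in>F. y = m \<or> (y, m) \<in> P"
    using insert.IH insert.prems chain_subset by blast
  have "x \<noteq> m" using insert.hyps m(1) by blast
  then have "(x, m) \<in> P \<or> (m, x) \<in> P"
    using insert.prems m(1) unfolding chain_def by blast
  then show ?case
  proof
    assume "(x, m) \<in> P"
    then show ?case using m by blast
  next
    assume mx: "(m, x) \<in> P"
    have "y = x \<or> (y, x) \<in> P" if "y \<in> insert x F" for y
      using that m(2) mx P_trans[of y m x] by auto
    then show ?case by blast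
  qed
qed auto

definition chains_to :: "'a \<Rightarrow> 'a set set" where
  "chains_to x = {C. C \<subseteq> V \<and> x \<in> C \<and> chain C \<and> (\<forall>y\<in>C. y = x \<or> (y, x) \<in> P)}"

lemma finite_chains_to: "finite (chains_to x)"
  by (rule finite_subset[of _ "Pow V"]) (auto simp: chains_to_def finite_V)

lemma singleton_chains_to: "x \<in> V \<Longrightarrow> {x} \<in> chains_to x"
  unfolding chains_to_def chain_def by auto

lemma chains_to_finite: "C \<in> chains_to x \<Longrightarrow> finite C"
  unfolding chains_to_def using finite_V finite_subset by blast

lemma chains_to_remove_top:
  assumes "C \<in> chains_to x" "C - {x} \<noteq> {}"
  obtains y where "(y, x) \<in> P" "C - {x} \<in> chains_to y"
proof -
  have ch: "chain (C - {x})" using assms(1) chain_subset unfolding chains_to_def by blast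
  obtain y where y: "y \<in> C - {x}" "\<forall>z\<in>C - {x}. z = y \<or> (z, y) \<in> P"
    using chain_top[OF _ assms(2) ch] chains_to_finite[OF assms(1)] by blast
  have "(y, x) \<in> P" using y(1) assms(1) unfolding chains_to_def by auto
  moreover have "C - {x} \<in> chains_to y" using assms(1) y ch unfolding chains_to_def by auto
  ultimately show thesis by (rule that)
qed

lemma chains_to_insert_top:
  assumes "C \<in> chains_to y" "(y, x) \<in> P"
  shows "insert x C \<in> chains_to x" "x \<notin> C"
proof -
  have below: "(z, x) \<in> P" if "z \<in> C" for z
  proof -
    have "z = y \<or> (z, y) \<in> P" using that assms(1) unfolding chains_to_def by auto
    then show ?thesis using assms(2) P_trans by blast
  qed
  then show "x \<notin> C" using P_irrefl by blast
  have C: "chain C" "C \<subseteq> V" using assms(1) unfolding chains_to_def by auto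
  then have "chain (insert x C)" using below unfolding chain_def by blast
  moreover have "x \<in> V" using assms(2) P_on_V by auto
  ultimately show "insert x C \<in> chains_to x" using C(2) below unfolding chains_to_def by blast
qed

text \<open>Strictly order-preserving maps into \<open>{1..k}\<close>: their number is the order polynomial.\<close>
definition strict_maps :: "nat \<Rightarrow> ('a \<Rightarrow> nat) set" where
  "strict_maps k = {f \<in> V \<rightarrow>\<^sub>E {1..k}. \<forall>x y. (x, y) \<in> P \<longrightarrow> f x < f y}"

text \<open>Lattice points of the dilated chain polytope: every chain has weight at most k.\<close>
definition chain_bounded :: "nat \<Rightarrow> ('a \<Rightarrow> nat) set" where
  "chain_bounded k = {g \<in> V \<rightarrow>\<^sub>E {1..k}. \<forall>C\<subseteq>V. chain C \<longrightarrow> sum g C \<le> k}"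

lemma finite_strict_maps: "finite (strict_maps k)"
  by (rule finite_subset[of _ "V \<rightarrow>\<^sub>E {1..k}"]) (auto simp: strict_maps_def finite_V intro: finite_PiE)

lemma finite_chain_bounded: "finite (chain_bounded k)"
  by (rule finite_subset[of _ "V \<rightarrow>\<^sub>E {1..k}"]) (auto simp: chain_bounded_def finite_V intro: finite_PiE)

definition below_max :: "('a \<Rightarrow> nat) \<Rightarrow> 'a \<Rightarrow> nat" where
  "below_max f x = Max (insert 0 (f ` {y. (y, x) \<in> P}))"

text \<open>Stanley's transfer map from the order polytope to the chain polytope.\<close>
definition transfer :: "('a \<Rightarrow> nat) \<Rightarrow> 'a \<Rightarrow> nat" where
  "transfer f = (\<lambda>x\<in>V. f x - below_max f x)"

lemma below_max_ge: "(y, x) \<in> P \<Longrightarrow> f y \<le> below_max f x"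
  unfolding below_max_def using finite_below by simp

lemma below_max_cases:
  obtains "below_max f x = 0" | y where "(y, x) \<in> P" "below_max f x = f y"
proof -
  have "below_max f x \<in> insert 0 (f ` {y. (y, x) \<in> P})"
    unfolding below_max_def by (rule Max_in) (use finite_below in auto)
  then show thesis using that by auto
qed

lemma below_max_less:
  assumes "f \<in> strict_maps k" "x \<in> V"
  shows "below_max f x < f x"
proof -
  have "1 \<le> f x" "\<And>y. (y, x) \<in> P \<Longrightarrow> f y < f x"
    using assms unfolding strict_maps_def by auto
  then show ?thesis by (cases rule: below_max_cases[of f x]) auto
qed

text \<open>Along a chain ending at m the transfer values telescope to at most \<open>f m\<close>.\<close>
lemma chain_sum_transfer:
  assumes f: "f \<in> strict_maps k"
  shows "C \<in> chains_to m \<Longrightarrow> sum (transfer f) C \<le> f m"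
proof (induction "card C" arbitrary: C m rule: less_induct)
  case less
  have m: "m \<in> V" "m \<in> C" and fin: "finite C" using less.prems chains_to_finite unfolding chains_to_def by auto
  have split: "sum (transfer f) C = (f m - below_max f m) + sum (transfer f) (C - {m})"
    using fin m by (simp add: sum.remove transfer_def)
  show ?case
  proof (cases "C - {m} = {}")
    case True
    then show ?thesis using split by (simp only: sum.empty)
  next
    case False
    then obtain m' where m': "(m', m) \<in> P" "C - {m} \<in> chains_to m'"
      using chains_to_remove_top[OF less.prems] by blast
    have "card (C - {m}) < card C" using fin m by (intro card_Diff1_less)
    then have "sum (transfer f) (C - {m}) \<le> f m'" using less.hyps m'(2) by blast
    also have "\<dots> \<le> below_max f m" using below_max_ge[OF m'(1)] .
    finally show ?thesis using split below_max_less[OF f m(1)] by linarith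
  qed
qed

lemma transfer_chain_bounded:
  assumes f: "f \<in> strict_maps k"
  shows "transfer f \<in> chain_bounded k"
proof -
  have fx: "f x \<in> {1..k}" if "x \<in> V" for x using f that unfolding strict_maps_def by auto
  have "transfer f x \<in> {1..k}" if "x \<in> V" for x
    using that fx[OF that] below_max_less[OF f that] by (auto simp: transfer_def)
  then have "transfer f \<in> V \<rightarrow>\<^sub>E {1..k}" by (rule PiE_I) (simp_all add: transfer_def)
  moreover have "sum (transfer f) C \<le> k" if C: "C \<subseteq> V" "chain C" for C
  proof (cases "C = {}")
    case False
    obtain m where m: "m \<in> C" "\<forall>y\<in>C. y = m \<or> (y, m) \<in> P"
      using chain_top[OF finite_subset[OF C(1) finite_V] False C(2)] by blast
    then have "C \<in> chains_to m" using C unfolding chains_to_def by auto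
    then have "sum (transfer f) C \<le> f m" by (rule chain_sum_transfer[OF f])
    also have "f m \<le> k" using f m C unfolding strict_maps_def by auto
    finally show ?thesis .
  qed simp
  ultimately show ?thesis unfolding chain_bounded_def by auto
qed

text \<open>Inverse of the transfer map: the heaviest chain ending at each element.\<close>
definition max_chain_sum :: "('a \<Rightarrow> nat) \<Rightarrow> 'a \<Rightarrow> nat" where
  "max_chain_sum g = (\<lambda>x\<in>V. Max (sum g ` chains_to x))"

lemma max_chain_sum_ge: "x \<in> V \<Longrightarrow> C \<in> chains_to x \<Longrightarrow> sum g C \<le> max_chain_sum g x"
  unfolding max_chain_sum_def using finite_chains_to by simp

lemma max_chain_sum_attained:
  assumes "x \<in> V"
  obtains C where "C \<in> chains_to x" "max_chain_sum g x = sum g C"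
proof -
  have "Max (sum g ` chains_to x) \<in> sum g ` chains_to x"
    by (rule Max_in) (use finite_chains_to singleton_chains_to[OF assms] in auto)
  then show thesis using assms that unfolding max_chain_sum_def by auto
qed

text \<open>The recursion which makes \<open>max_chain_sum\<close> a right inverse of \<open>transfer\<close>.\<close>
lemma max_chain_sum_rec:
  assumes x: "x \<in> V"
  shows "max_chain_sum g x = g x + below_max (max_chain_sum g) x"
proof (rule antisym)
  obtain C where C: "C \<in> chains_to x" "max_chain_sum g x = sum g C"
    using max_chain_sum_attained[OF x] .
  have "x \<in> C" "finite C" using C(1) chains_to_finite unfolding chains_to_def by auto
  then have split: "sum g C = g x + sum g (C - {x})" by (simp add: sum.remove)
  have "sum g (C - {x}) \<le> below_max (max_chain_sum g) x"
  proof (cases "C - {x} = {}")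
    case False
    then obtain y where y: "(y, x) \<in> P" "C - {x} \<in> chains_to y"
      using chains_to_remove_top[OF C(1)] by blast
    have "y \<in> V" using y(1) P_on_V by auto
    then have "sum g (C - {x}) \<le> max_chain_sum g y" using y(2) by (rule max_chain_sum_ge)
    also have "\<dots> \<le> below_max (max_chain_sum g) x" by (rule below_max_ge[OF y(1)])
    finally show ?thesis .
  qed (simp only: sum.empty)
  then show "max_chain_sum g x \<le> g x + below_max (max_chain_sum g) x" using C(2) split by linarith
next
  show "g x + below_max (max_chain_sum g) x \<le> max_chain_sum g x"
  proof (cases rule: below_max_cases[of "max_chain_sum g" x])
    case 1
    then show ?thesis using max_chain_sum_ge[OF x singleton_chains_to[OF x], of g] by simp
  next
    case (2 y)
    have "y \<in> V" using 2(1) P_on_V by auto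
    then obtain C where C: "C \<in> chains_to y" "max_chain_sum g y = sum g C"
      by (rule max_chain_sum_attained)
    have "sum g (insert x C) \<le> max_chain_sum g x"
      using max_chain_sum_ge[OF x chains_to_insert_top(1)[OF C(1) 2(1)]] .
    then show ?thesis
      using 2(2) C(2) chains_to_insert_top(2)[OF C(1) 2(1)] chains_to_finite[OF C(1)] by simp
  qed
qed

lemma max_chain_sum_strict_maps:
  assumes g: "g \<in> chain_bounded k"
  shows "max_chain_sum g \<in> strict_maps k"
proof -
  have gx: "x \<in> V \<Longrightarrow> g x \<in> {1..k}" for x using g unfolding chain_bounded_def by auto
  have "max_chain_sum g x \<in> {1..k}" if x: "x \<in> V" for x
  proof -
    obtain C where C: "C \<in> chains_to x" "max_chain_sum g x = sum g C"
      using max_chain_sum_attained[OF x] .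
    have "sum g C \<le> k" using g C(1) unfolding chain_bounded_def chains_to_def by auto
    then show ?thesis using C(2) max_chain_sum_rec[OF x, of g] gx[OF x] by auto
  qed
  moreover have "max_chain_sum g x < max_chain_sum g y" if xy: "(x, y) \<in> P" for x y
  proof -
    have y: "y \<in> V" using xy P_on_V by auto
    have "max_chain_sum g x \<le> below_max (max_chain_sum g) y" by (rule below_max_ge[OF xy])
    also have "\<dots> < max_chain_sum g y" using max_chain_sum_rec[OF y, of g] gx[OF y] by simp
    finally show ?thesis .
  qed
  ultimately show ?thesis unfolding strict_maps_def max_chain_sum_def by auto
qed

lemma transfer_max_chain_sum:
  assumes g: "g \<in> chain_bounded k"
  shows "transfer (max_chain_sum g) = g"
proof
  fix x show "transfer (max_chain_sum g) x = g x"
    using g max_chain_sum_rec[of x g]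
    by (cases "x \<in> V") (auto simp: transfer_def chain_bounded_def PiE_def extensional_def)
qed

lemma wf_P: "wf P"
proof (rule finite_acyclic_wf)
  show "finite P" using finite_V P_on_V by (meson finite_SigmaI finite_subset)
  show "acyclic P" unfolding acyclic_def using trancl_id[OF trans_P] P_irrefl by auto
qed

text \<open>A strict map is recovered from its transfer by well-founded recursion along P.\<close>
lemma transfer_inj: "inj_on transfer (strict_maps k)"
proof (rule inj_onI)
  fix f f' assume f: "f \<in> strict_maps k" and f': "f' \<in> strict_maps k"
    and eq: "transfer f = transfer f'"
  have "x \<in> V \<longrightarrow> f x = f' x" for x
  proof (induction x rule: wf_induct[OF wf_P])
    case (1 x)
    show ?case
    proof
      assume x: "x \<in> V"
      have "f ` {y. (y, x) \<in> P} = f' ` {y. (y, x) \<in> P}"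
        using 1 P_on_V by (intro image_cong) auto
      then have "below_max f x = below_max f' x" unfolding below_max_def by simp
      moreover have "f x - below_max f x = f' x - below_max f' x"
        using fun_cong[OF eq, of x] x by (simp add: transfer_def)
      ultimately show "f x = f' x" using below_max_less[OF f x] below_max_less[OF f' x] by linarith
    qed
  qed
  then show "f = f'" using f f' unfolding strict_maps_def by (auto intro: PiE_ext)
qed

text \<open>Stanley: the transfer map is a bijection from strict maps into \<open>{1..k}\<close> onto the
  chain-bounded maps, so the order polynomial counts lattice points of the chain polytope.\<close>
theorem card_strict_maps_chain_bounded: "card (strict_maps k) = card (chain_bounded k)"
proof (rule bij_betw_same_card)
  have "chain_bounded k \<subseteq> transfer ` strict_maps k"
    using transfer_max_chain_sum max_chain_sum_strict_maps by (metis image_eqI subsetI)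
  then show "bij_betw transfer (strict_maps k) (chain_bounded k)"
    unfolding bij_betw_def using transfer_inj transfer_chain_bounded by blast
qed

text \<open>Since P is transitive, linear extensions of the induced order are those of P itself.\<close>
lemma linear_extensions_iff:
  "L \<in> linear_extensions V P \<longleftrightarrow>
     L \<in> V \<rightarrow>\<^sub>E {1..card V} \<and> bij_betw L V {1..card V} \<and> (\<forall>x y. (x, y) \<in> P \<longrightarrow> L x < L y)"
  by (simp add: linear_extensions_def induced_less_def trancl_id[OF trans_P])

lemma finite_linear_extensions: "finite (linear_extensions V P)"
proof (rule finite_subset)
  show "linear_extensions V P \<subseteq> V \<rightarrow>\<^sub>E {1..card V}" using linear_extensions_iff by blast
qed (simp add: finite_V finite_PiE)

lemma linear_extension_position:
  assumes "L \<in> linear_extensions V P" "x \<in> V"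
  shows "1 \<le> L x" "L x - 1 < card V"
  using assms by (auto simp: linear_extensions_iff PiE_iff)

definition spread :: "('a \<Rightarrow> nat) \<Rightarrow> nat set \<Rightarrow> 'a \<Rightarrow> nat" where
  "spread L A = (\<lambda>x\<in>V. enumerate A (L x - 1))"

lemma spread_image:
  assumes L: "L \<in> linear_extensions V P" and A: "finite A" "card A = card V"
  shows "spread L A ` V = A"
proof
  show "spread L A ` V \<subseteq> A"
    using finite_enumerate_in_set[OF A(1)] linear_extension_position[OF L] A(2)
    by (auto simp: spread_def)
next
  show "A \<subseteq> spread L A ` V"
  proof
    fix a assume "a \<in> A"
    then obtain i where i: "i < card V" "enumerate A i = a"
      using finite_enumerate_Ex[OF A(1)] A(2) by metis
    have "L ` V = {1..card V}" using L by (simp add: linear_extensions_iff bij_betw_def)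
    then have "i + 1 \<in> L ` V" using i(1) by simp
    then obtain x where x: "i + 1 = L x" "x \<in> V" by (rule imageE)
    show "a \<in> spread L A ` V"
      using i(2) x(1)[symmetric] by (intro image_eqI[OF _ x(2)]) (simp add: spread_def x(2))
  qed
qed

lemma spread_strict_map:
  assumes L: "L \<in> linear_extensions V P" and A: "A \<subseteq> {1..k}" "card A = card V"
  shows "spread L A \<in> strict_maps k"
proof -
  have fin: "finite A" using A(1) finite_subset by blast
  have "spread L A x \<in> {1..k}" if "x \<in> V" for x
    using spread_image[OF L fin A(2)] A(1) that by blast
  moreover have "spread L A x < spread L A y" if "(x, y) \<in> P" for x y
  proof -
    have xy: "x \<in> V" "y \<in> V" using that P_on_V by auto
    have "L x < L y" using L that by (simp add: linear_extensions_iff)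
    then have "L x - 1 < L y - 1" using linear_extension_position[OF L xy(1)] by linarith
    then show ?thesis
      using linear_extension_position[OF L xy(1)] linear_extension_position[OF L xy(2)] A(2) fin xy
      by (simp add: spread_def finite_enumerate_mono_iff)
  qed
  ultimately show ?thesis unfolding strict_maps_def spread_def by auto
qed

text \<open>The set A is recovered as the image, and then L from the position of each value in A.\<close>
lemma spread_inj:
  assumes L: "L \<in> linear_extensions V P" "L' \<in> linear_extensions V P"
    and A: "finite A" "card A = card V" "finite A'" "card A' = card V"
    and eq: "spread L A = spread L' A'"
  shows "L = L'" "A = A'"
proof -
  show "A = A'" using spread_image[OF L(1) A(1,2)] spread_image[OF L(2) A(3,4)] eq by simp
  have inj_enum: "inj_on (enumerate A) {..<card A}"
    using finite_bij_enumerate[OF A(1)] by (rule bij_betw_imp_inj_on)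
  have "L x = L' x" if x: "x \<in> V" for x
  proof -
    note pos = linear_extension_position[OF L(1) x] linear_extension_position[OF L(2) x]
    have "enumerate A (L x - 1) = enumerate A (L' x - 1)"
      using fun_cong[OF eq, of x] x \<open>A = A'\<close> by (simp add: spread_def)
    with inj_enum have "L x - 1 = L' x - 1" by (rule inj_onD) (use pos A(2) in auto)
    then show ?thesis using pos by simp
  qed
  moreover have "L \<in> V \<rightarrow>\<^sub>E {1..card V}" "L' \<in> V \<rightarrow>\<^sub>E {1..card V}"
    using L linear_extensions_iff by blast+
  ultimately show "L = L'" by (metis PiE_ext)
qed

text \<open>Spreading gives an injection of pairs (linear extension, \<open>card V\<close>-subset of
  \<open>{1..k}\<close>) into strict maps, whence the lower bound.\<close>
lemma strict_maps_lower_bound: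
  "card (linear_extensions V P) * (k choose card V) \<le> card (strict_maps k)"
proof -
  let ?S = "{A. A \<subseteq> {1..k} \<and> card A = card V}"
  have "inj_on (\<lambda>(L, A). spread L A) (linear_extensions V P \<times> ?S)"
  proof (rule inj_onI)
    fix p q assume p: "p \<in> linear_extensions V P \<times> ?S" and q: "q \<in> linear_extensions V P \<times> ?S"
      and eq: "(\<lambda>(L, A). spread L A) p = (\<lambda>(L, A). spread L A) q"
    obtain L A L' A' where pq: "p = (L, A)" "q = (L', A')" by (cases p, cases q)
    have L: "L \<in> linear_extensions V P" "L' \<in> linear_extensions V P"
      and A: "A \<subseteq> {1..k}" "card A = card V" "A' \<subseteq> {1..k}" "card A' = card V"
      using p q unfolding pq by auto
    have "finite A" "finite A'" using A(1,3) finite_subset by blast+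
    note inj = spread_inj[OF L \<open>finite A\<close> A(2) \<open>finite A'\<close> A(4)]
    show "p = q" using eq inj unfolding pq by simp
  qed
  moreover have "(\<lambda>(L, A). spread L A) ` (linear_extensions V P \<times> ?S) \<subseteq> strict_maps k"
  proof (rule image_subsetI)
    fix p assume "p \<in> linear_extensions V P \<times> ?S"
    then show "(\<lambda>(L, A). spread L A) p \<in> strict_maps k"
      using spread_strict_map by (cases p) simp
  qed
  ultimately have "card (linear_extensions V P \<times> ?S) \<le> card (strict_maps k)"
    using finite_strict_maps by (rule card_inj_on_le)
  then show ?thesis by (simp add: card_cartesian_product n_subsets)
qed

lemma tiebreak_linear_extension:
  assumes \<tau>: "bij_betw \<tau> V {..<card V}" and f: "f \<in> strict_maps k"
  shows "(\<lambda>x\<in>V. tiebreak_rank V \<tau> f x + 1) \<in> linear_extensions V P"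
proof -
  have "bij_betw (\<lambda>x\<in>V. tiebreak_rank V \<tau> f x + 1) V {1..card V}"
    using tiebreak_rank_bij[OF finite_V \<tau>, of f]
    by (rule bij_betw_cong[THEN iffD1, rotated]) simp
  moreover have "tiebreak_rank V \<tau> f x < tiebreak_rank V \<tau> f y" if "(x, y) \<in> P" for x y
    using that P_on_V f tiebreak_rank_strict_mono[OF finite_V \<tau>] unfolding strict_maps_def by auto
  ultimately show ?thesis
    using P_on_V unfolding linear_extensions_iff bij_betw_def by auto
qed

text \<open>Conversely, a strict map \<open>f\<close> is encoded by the tie-broken linear extension together with
  the set of values \<open>f x + rank x\<close>, a \<open>card V\<close>-subset of \<open>{1..k + card V - 1}\<close>.\<close>
lemma strict_maps_upper_bound:
  "card (strict_maps k) \<le> card (linear_extensions V P) * ((k + card V - 1) choose card V)"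
proof -
  let ?n = "card V"
  let ?S = "{A. A \<subseteq> {1..k + ?n - 1} \<and> card A = ?n}"
  obtain \<tau> where \<tau>: "bij_betw \<tau> V {..<?n}"
    using ex_bij_betw_finite_nat[OF finite_V] atLeast0LessThan by metis
  define r where "r f = tiebreak_rank V \<tau> f" for f
  define encode where "encode f = ((\<lambda>x\<in>V. r f x + 1), (\<lambda>x. f x + r f x) ` V)" for f
  have "encode f \<in> linear_extensions V P \<times> ?S" if f: "f \<in> strict_maps k" for f
  proof -
    have "f x + r f x \<in> {1..k + ?n - 1}" if "x \<in> V" for x
    proof -
      have "f x \<in> {1..k}" using f that unfolding strict_maps_def by auto
      then show ?thesis using tiebreak_rank_less_card[OF finite_V \<tau> that, of f] unfolding r_def by auto
    qed
    moreover have "card ((\<lambda>x. f x + r f x) ` V) = ?n"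
      using card_image tiebreak_shift_inj[OF finite_V \<tau>] unfolding r_def by blast
    ultimately show ?thesis
      using tiebreak_linear_extension[OF \<tau> f] unfolding encode_def r_def by auto
  qed
  then have into: "encode ` strict_maps k \<subseteq> linear_extensions V P \<times> ?S" by (rule image_subsetI)
  have "inj_on encode (strict_maps k)"
  proof (rule inj_onI)
    fix f g assume f: "f \<in> strict_maps k" and g: "g \<in> strict_maps k" and eq: "encode f = encode g"
    have ranks: "r f x = r g x" if "x \<in> V" for x
      using fun_cong[OF arg_cong[OF eq, of fst], of x] that unfolding encode_def by simp
    have images: "(\<lambda>x. f x + r f x) ` V = (\<lambda>x. g x + r g x) ` V"
      using arg_cong[OF eq, of snd] unfolding encode_def by simp
    have "f x = g x" if "x \<in> V" for x
      using tiebreak_shift_determines[OF finite_V \<tau> _ _ that] ranks images unfolding r_def by blast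
    then show "f = g" using f g unfolding strict_maps_def by (auto intro: PiE_ext)
  qed
  then have "card (strict_maps k) \<le> card (linear_extensions V P \<times> ?S)"
    using into by (rule card_inj_on_le) (simp add: finite_linear_extensions)
  then show ?thesis by (simp add: card_cartesian_product n_subsets)
qed

end

lemma fact_binomial_lower:
  assumes "k \<le> m"
  shows "(real m - real k) ^ k \<le> fact k * real (m choose k)"
proof -
  have "fact k * real (m choose k) = (\<Prod>i = 0..<k. real m - real i)"
    by (simp add: binomial_gbinomial gbinomial_mult_fact)
  moreover have "(\<Prod>i = 0..<k. real m - real k) \<le> (\<Prod>i = 0..<k. real m - real i)"
    by (rule prod_mono) (use assms in auto)
  ultimately show ?thesis by simp
qed

lemma fact_binomial_upper: "fact k * real (m choose k) \<le> real m ^ k"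
proof -
  have "real ((m choose k) * fact k) \<le> real (m ^ k)"
    by (simp only: of_nat_le_iff binomial_fact_pow)
  then show ?thesis by (simp add: mult.commute)
qed

lemma scaled_binomial_bounds:
  fixes n t :: nat
  assumes "t \<ge> 1"
  shows "real t ^ n * (2 * real n - real n / real t) ^ n \<le> fact n * real ((2 * n * t) choose n)"
    and "fact n * real ((2 * n * t + n - 1) choose n) \<le> real t ^ n * (2 * real n + real n / real t) ^ n"
proof -
  have t: "real t > 0" using assms by simp
  have "real t * (2 * real n - real n / real t) = real (2 * n * t) - real n"
    using t by (simp add: field_simps)
  then have "real t ^ n * (2 * real n - real n / real t) ^ n = (real (2 * n * t) - real n) ^ n"
    by (metis power_mult_distrib)
  also have "\<dots> \<le> fact n * real ((2 * n * t) choose n)"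
    by (rule fact_binomial_lower) (use assms in \<open>auto simp: mult.assoc\<close>)
  finally show "real t ^ n * (2 * real n - real n / real t) ^ n \<le> fact n * real ((2 * n * t) choose n)" .
  have "fact n * real ((2 * n * t + n - 1) choose n) \<le> real (2 * n * t + n - 1) ^ n"
    by (rule fact_binomial_upper)
  also have "\<dots> \<le> (real (2 * n * t) + real n) ^ n"
  proof (rule power_mono)
    have "2 * n * t + n - 1 \<le> 2 * n * t + n" by simp
    then show "real (2 * n * t + n - 1) \<le> real (2 * n * t) + real n" by (metis of_nat_add of_nat_le_iff)
  qed simp
  also have "real (2 * n * t) + real n = real t * (2 * real n + real n / real t)"
    using t by (simp add: field_simps)
  finally show "fact n * real ((2 * n * t + n - 1) choose n) \<le> real t ^ n * (2 * real n + real n / real t) ^ n"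
    by (simp add: power_mult_distrib)
qed

text \<open>Comparing leading coefficients: if for all dilations \<open>t\<close> the lower sandwich bound for
  \<open>a\<close> plus an extra \<open>c t\<^sup>n\<close> stays below the upper bound for \<open>b\<close>, then dividing by \<open>t\<^sup>n / n!\<close>
  and letting \<open>t \<rightarrow> \<infinity>\<close> gives the inequality between the leading terms.\<close>
lemma leading_coefficient_le:
  fixes a b c n :: nat
  assumes H: "\<And>t. t \<ge> 1 \<Longrightarrow> a * ((2 * n * t) choose n) + c * t ^ n \<le> b * ((2 * n * t + n - 1) choose n)"
  shows "real a * (2 * real n) ^ n + real c * fact n \<le> real b * (2 * real n) ^ n"
proof -
  define lo where "lo t = real a * (2 * real n - real n / real t) ^ n + real c * fact n" for t :: nat
  define hi where "hi t = real b * (2 * real n + real n / real t) ^ n" for t :: nat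
  have "lo t \<le> hi t" if t: "t \<ge> 1" for t
  proof -
    note bounds = scaled_binomial_bounds[OF t, of n]
    have "real (a * ((2 * n * t) choose n) + c * t ^ n) \<le> real (b * ((2 * n * t + n - 1) choose n))"
      using H[OF t] by (simp only: of_nat_le_iff)
    then have "real a * real ((2 * n * t) choose n) + real c * real t ^ n
               \<le> real b * real ((2 * n * t + n - 1) choose n)" by simp
    then have "fact n * (real a * real ((2 * n * t) choose n) + real c * real t ^ n)
               \<le> fact n * (real b * real ((2 * n * t + n - 1) choose n))"
      by (rule mult_left_mono) simp
    then have "real t ^ n * lo t \<le> real t ^ n * hi t"
      using mult_left_mono[OF bounds(1), of "real a"] mult_left_mono[OF bounds(2), of "real b"]
      unfolding lo_def hi_def by (simp add: algebra_simps)
    then show ?thesis using t by (simp add: mult_le_cancel_left_pos)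
  qed
  moreover have "lo \<longlonglongrightarrow> real a * (2 * real n) ^ n + real c * fact n"
    unfolding lo_def
    by (intro tendsto_intros) (rule lim_const_over_n[THEN tendsto_diff[OF tendsto_const], simplified])
  moreover have "hi \<longlonglongrightarrow> real b * (2 * real n) ^ n"
    unfolding hi_def
    by (intro tendsto_intros) (rule lim_const_over_n[THEN tendsto_add[OF tendsto_const], simplified])
  ultimately show ?thesis by (intro LIMSEQ_le) (auto intro: eventually_sequentiallyI)
qed

locale comparability_subgraph =
  P: finite_strict_order V P + Q: finite_strict_order V Q for V P Q +
  assumes Q_comparable_in_P: "(x, y) \<in> Q \<Longrightarrow> (x, y) \<in> P \<or> (y, x) \<in> P"
begin

text \<open>Fewer comparabilities mean fewer chains, hence a larger chain polytope.\<close>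
lemma chain_bounded_mono: "P.chain_bounded k \<subseteq> Q.chain_bounded k"
proof -
  have "Q.chain C \<Longrightarrow> P.chain C" for C
    unfolding P.chain_def Q.chain_def using Q_comparable_in_P by blast
  then show ?thesis unfolding P.chain_bounded_def Q.chain_bounded_def by auto
qed

text \<open>With the transfer bijections, Q has as many more strict maps than P as there are
  lattice points in Q's chain polytope outside P's.\<close>
lemma card_strict_maps_split:
  "card (P.strict_maps k) + card (Q.chain_bounded k - P.chain_bounded k) = card (Q.strict_maps k)"
  using card_Diff_subset[OF finite_subset[OF chain_bounded_mono Q.finite_chain_bounded] chain_bounded_mono]
    card_mono[OF Q.finite_chain_bounded chain_bounded_mono]
  by (simp add: P.card_strict_maps_chain_bounded Q.card_strict_maps_chain_bounded)

text \<open>Plugging the sandwich bounds into the counts at \<open>k = 2 n t\<close> and comparing leading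
  coefficients: a surplus of \<open>c t\<^sup>n\<close> lattice points in the larger chain polytope yields a
  surplus \<open>c n! / (2n)\<^sup>n\<close> in the number of linear extensions.\<close>
lemma linear_extensions_surplus:
  fixes c :: nat
  defines "n \<equiv> card V"
  assumes surplus: "\<And>t. t \<ge> 1 \<Longrightarrow> c * t ^ n \<le> card (Q.chain_bounded (2 * n * t) - P.chain_bounded (2 * n * t))"
  shows "real (card (linear_extensions V P)) * (2 * real n) ^ n + real c * fact n
           \<le> real (card (linear_extensions V Q)) * (2 * real n) ^ n"
proof (rule leading_coefficient_le)
  fix t :: nat assume t: "t \<ge> 1"
  have "card (linear_extensions V P) * ((2 * n * t) choose n) + c * t ^ n
        \<le> card (P.strict_maps (2 * n * t)) + card (Q.chain_bounded (2 * n * t) - P.chain_bounded (2 * n * t))"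
    using P.strict_maps_lower_bound surplus[OF t] unfolding n_def by (intro add_mono)
  also have "\<dots> = card (Q.strict_maps (2 * n * t))" by (rule card_strict_maps_split)
  also have "\<dots> \<le> card (linear_extensions V Q) * ((2 * n * t + n - 1) choose n)"
    using Q.strict_maps_upper_bound unfolding n_def .
  finally show "card (linear_extensions V P) * ((2 * n * t) choose n) + c * t ^ n
        \<le> card (linear_extensions V Q) * ((2 * n * t + n - 1) choose n)" .
qed

theorem card_linear_extensions_le: "card (linear_extensions V P) \<le> card (linear_extensions V Q)"
proof -
  have "real (card (linear_extensions V P)) * (2 * real (card V)) ^ card V
        \<le> real (card (linear_extensions V Q)) * (2 * real (card V)) ^ card V"
    using linear_extensions_surplus[of 0] by simp
  moreover have "(2 * real (card V)) ^ card V > 0" by (cases "card V = 0") auto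
  ultimately have "real (card (linear_extensions V P)) \<le> real (card (linear_extensions V Q))"
    by (rule mult_right_le_imp_le)
  then show ?thesis by simp
qed

definition gap_box :: "'a \<Rightarrow> 'a \<Rightarrow> nat \<Rightarrow> ('a \<Rightarrow> nat) set" where
  "gap_box a b t = (\<Pi>\<^sub>E x\<in>V. if x \<in> {a, b} then {card V * t + 1..(card V + 1) * t} else {1..t})"

lemma card_gap_box: "card (gap_box a b t) = t ^ card V"
proof -
  have "card (if x \<in> {a, b} then {card V * t + 1..(card V + 1) * t} else {1..t}) = t" for x by auto
  then show ?thesis unfolding gap_box_def by (simp add: card_PiE[OF P.finite_V])
qed

text \<open>If no Q-chain contains both a and b, a chain sum over the box is at most
  \<open>(n+1) t + (n-2) t \<le> 2 n t\<close>.\<close>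
lemma gap_box_chain_bounded:
  assumes V: "a \<in> V" "b \<in> V" "a \<noteq> b" and incomparable: "(a, b) \<notin> Q" "(b, a) \<notin> Q"
    and g: "g \<in> gap_box a b t"
  shows "g \<in> Q.chain_bounded (2 * card V * t)"
proof -
  let ?n = "card V"
  have n2: "?n \<ge> 2" using card_mono[OF P.finite_V, of "{a, b}"] V by auto
  have top: "g x \<le> (?n + 1) * t" and low: "x \<notin> {a, b} \<Longrightarrow> g x \<le> t" and pos: "1 \<le> g x"
    if "x \<in> V" for x
    using PiE_mem[OF g[unfolded gap_box_def] that] by (auto split: if_splits)
  have "g \<in> V \<rightarrow>\<^sub>E {1..2 * ?n * t}"
  proof (rule PiE_I)
    fix x assume x: "x \<in> V"
    have "(?n + 1) * t \<le> 2 * ?n * t" using n2 by simp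
    then have "g x \<le> 2 * ?n * t" using top[OF x] by (rule order_trans[rotated])
    then show "g x \<in> {1..2 * ?n * t}" using pos[OF x] by simp
  qed (use g in \<open>auto simp: gap_box_def\<close>)
  moreover have "sum g C \<le> 2 * ?n * t" if C: "C \<subseteq> V" "Q.chain C" for C
  proof -
    have "\<not> (a \<in> C \<and> b \<in> C)" using C(2) incomparable V(3) unfolding Q.chain_def by blast
    then consider "C \<inter> {a, b} = {}" | "C \<inter> {a, b} = {a}" | "C \<inter> {a, b} = {b}" by blast
    then have "sum g (C \<inter> {a, b}) \<le> (?n + 1) * t" using top V(1,2) by cases simp_all
    moreover have "sum g (C - {a, b}) \<le> (?n - 2) * t"
    proof -
      have "sum g (C - {a, b}) \<le> card (C - {a, b}) * t"
        using sum_bounded_above[of "C - {a, b}" g t] low C(1) by (simp add: subset_iff)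
      also have "card (C - {a, b}) \<le> card (V - {a, b})" using C(1) P.finite_V by (intro card_mono) auto
      also have "card (V - {a, b}) = ?n - 2" using V P.finite_V by (simp add: card_Diff_subset)
      finally show ?thesis by simp
    qed
    moreover have "sum g C = sum g (C \<inter> {a, b}) + sum g (C - {a, b})"
      using finite_subset[OF C(1) P.finite_V] by (rule sum.Int_Diff)
    moreover have "(?n + 1) * t + (?n - 2) * t \<le> 2 * ?n * t"
    proof -
      have "(?n + 1) * t + (?n - 2) * t = (?n + 1 + (?n - 2)) * t" by (rule add_mult_distrib[symmetric])
      also have "\<dots> \<le> (2 * ?n) * t" using n2 by (intro mult_right_mono) auto
      finally show ?thesis by simp
    qed
    ultimately show ?thesis by linarith
  qed
  ultimately show ?thesis unfolding Q.chain_bounded_def by blast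
qed

text \<open>The P-chain \<open>{a, b}\<close> has weight more than \<open>2 n t\<close> on the box.\<close>
lemma gap_box_not_chain_bounded:
  assumes ab: "(a, b) \<in> P" and g: "g \<in> gap_box a b t"
  shows "g \<notin> P.chain_bounded (2 * card V * t)"
proof
  assume bounded: "g \<in> P.chain_bounded (2 * card V * t)"
  have V: "a \<in> V" "b \<in> V" "a \<noteq> b" using ab P.P_on_V P.P_irrefl by auto
  then have "{a, b} \<subseteq> V" "P.chain {a, b}" using ab unfolding P.chain_def by auto
  then have "sum g {a, b} \<le> 2 * card V * t" using bounded unfolding P.chain_bounded_def by blast
  moreover have "g a \<ge> card V * t + 1" "g b \<ge> card V * t + 1"
    using PiE_mem[OF g[unfolded gap_box_def] V(1)] PiE_mem[OF g[unfolded gap_box_def] V(2)] by auto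
  ultimately show False using V(3) by simp
qed

lemma chain_bounded_gap:
  assumes "(a, b) \<in> P" "(a, b) \<notin> Q" "(b, a) \<notin> Q"
  shows "t ^ card V \<le> card (Q.chain_bounded (2 * card V * t) - P.chain_bounded (2 * card V * t))"
proof -
  have "a \<in> V" "b \<in> V" "a \<noteq> b" using assms(1) P.P_on_V P.P_irrefl by auto
  then have "gap_box a b t \<subseteq> Q.chain_bounded (2 * card V * t) - P.chain_bounded (2 * card V * t)"
    using gap_box_chain_bounded gap_box_not_chain_bounded assms by blast
  then show ?thesis
    using card_mono[OF finite_Diff[OF Q.finite_chain_bounded]] card_gap_box by metis
qed

theorem card_linear_extensions_less:
  assumes "(a, b) \<in> P" "(a, b) \<notin> Q" "(b, a) \<notin> Q"
  shows "card (linear_extensions V P) < card (linear_extensions V Q)"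
proof -
  have "real (card (linear_extensions V P)) * (2 * real (card V)) ^ card V + real 1 * fact (card V)
        \<le> real (card (linear_extensions V Q)) * (2 * real (card V)) ^ card V"
    using linear_extensions_surplus[of 1] chain_bounded_gap[OF assms] by simp
  moreover have "(0::real) < fact (card V)" by simp
  ultimately have "real (card (linear_extensions V P)) * (2 * real (card V)) ^ card V
        < real (card (linear_extensions V Q)) * (2 * real (card V)) ^ card V" by linarith
  then have "real (card (linear_extensions V P)) < real (card (linear_extensions V Q))"
    by (rule mult_right_less_imp_less) simp
  then show ?thesis by simp
qed

end

lemma edge_vertices:
  assumes "simple_graph V E" "{u, v} \<in> E"
  shows "u \<in> V" "v \<in> V" "u \<noteq> v"
proof -
  obtain a b where "{u, v} = {a, b}" "a \<noteq> b" "a \<in> V" "b \<in> V"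
    using assms unfolding simple_graph_def by blast
  then show "u \<in> V" "v \<in> V" "u \<noteq> v" by (auto simp: doubleton_eq_iff)
qed

lemma orientation_arc:
  assumes "orientation E Or" "(u, v) \<in> Or"
  shows "{u, v} \<in> E" "u \<noteq> v" "(v, u) \<notin> Or"
  using assms unfolding orientation_def by blast+

lemma orientation_edge:
  assumes "orientation E Or" "{u, v} \<in> E" "u \<noteq> v"
  shows "(u, v) \<in> Or \<or> (v, u) \<in> Or"
  using assms unfolding orientation_def by blast

lemma orientation_on_V:
  assumes "simple_graph V E" "orientation E Or"
  shows "Or \<subseteq> V \<times> V"
  using edge_vertices[OF assms(1)] orientation_arc(1)[OF assms(2)] by fast

lemma acyclic_no_3_cycle:
  assumes "acyclic Or" "(a, b) \<in> Or" "(b, c) \<in> Or" "(c, a) \<in> Or"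
  shows False
proof -
  have "(a, a) \<in> Or\<^sup>+" using assms(2-4) by (meson trancl.r_into_trancl trancl_into_trancl)
  then show False using assms(1) unfolding acyclic_def by blast
qed

lemma acyclic_orientation_strict_order:
  assumes "simple_graph V E" "acyclic_orientation E Or"
  shows "finite_strict_order V (Or\<^sup>+)"
proof
  show "finite V" using assms(1) unfolding simple_graph_def by simp
  show "Or\<^sup>+ \<subseteq> V \<times> V"
    using orientation_on_V[OF assms(1)] assms(2) unfolding acyclic_orientation_def
    by (intro trancl_subset_Sigma) simp
  show "irrefl (Or\<^sup>+)" using assms(2) by (simp add: acyclic_orientation_def acyclic_irrefl)
qed simp

text \<open>Directed paths \<open>w \<rightarrow> v \<rightarrow> w'\<close> of length two, split by whether the ends are adjacent.
  Open wedges are exactly the obstructions to transitivity.\<close>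
definition open_wedges :: "'a set set \<Rightarrow> ('a \<times> 'a) set \<Rightarrow> ('a \<times> 'a \<times> 'a) set" where
  "open_wedges E Or = {(v, w, w'). (w, v) \<in> Or \<and> (v, w') \<in> Or \<and> {w, w'} \<notin> E}"

definition closed_wedges :: "'a set set \<Rightarrow> ('a \<times> 'a) set \<Rightarrow> ('a \<times> 'a \<times> 'a) set" where
  "closed_wedges E Or = {(v, w, w'). (w, v) \<in> Or \<and> (v, w') \<in> Or \<and> {w, w'} \<in> E}"

definition triangles :: "'a set set \<Rightarrow> 'a set set" where
  "triangles E = {{a, b, c} | a b c. {a, b} \<in> E \<and> {b, c} \<in> E \<and> {a, c} \<in> E}"

text \<open>Without open wedges, the composite of two arcs is an edge, which acyclicity orients
  forward: the orientation is transitive.\<close>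
lemma no_open_wedges_trans:
  assumes "orientation E Or" "acyclic Or" "open_wedges E Or = {}"
  shows "trans Or"
proof (rule transI)
  fix x y z assume xy: "(x, y) \<in> Or" and yz: "(y, z) \<in> Or"
  have "{x, z} \<in> E" using assms(3) xy yz unfolding open_wedges_def by auto
  moreover have "x \<noteq> z" using orientation_arc[OF assms(1) xy] yz by auto
  ultimately have "(x, z) \<in> Or \<or> (z, x) \<in> Or" using orientation_edge[OF assms(1)] by blast
  then show "(x, z) \<in> Or" using acyclic_no_3_cycle[OF assms(2) xy yz] by blast
qed

lemma transitive_orientation_iff_no_open_wedges:
  assumes "simple_graph V E" "acyclic_orientation E Or"
  shows "transitive_orientation E Or \<longleftrightarrow> open_wedges E Or = {}"
proof
  assume "transitive_orientation E Or"
  then have induced: "{{u, v} | u v. (u, v) \<in> Or\<^sup>+} = E"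
    unfolding transitive_orientation_def induced_less_def by simp
  show "open_wedges E Or = {}"
  proof (rule ccontr)
    assume "open_wedges E Or \<noteq> {}"
    then obtain v w w' where path: "(w, v) \<in> Or" "(v, w') \<in> Or" and "{w, w'} \<notin> E"
      unfolding open_wedges_def by auto
    moreover have "(w, w') \<in> Or\<^sup>+" using path by (meson trancl.r_into_trancl trancl_into_trancl)
    ultimately show False using induced by blast
  qed
next
  assume no_open: "open_wedges E Or = {}"
  have or: "orientation E Or" and acyc: "acyclic Or"
    using assms(2) unfolding acyclic_orientation_def by auto
  have "Or\<^sup>+ = Or" using no_open_wedges_trans[OF or acyc no_open] by (rule trancl_id)
  moreover have "{{u, v} | u v. (u, v) \<in> Or} = E"
  proof
    show "{{u, v} | u v. (u, v) \<in> Or} \<subseteq> E" using orientation_arc(1)[OF or] by blast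
    show "E \<subseteq> {{u, v} | u v. (u, v) \<in> Or}"
    proof
      fix e assume e: "e \<in> E"
      then obtain u v where uv: "e = {u, v}" "u \<noteq> v" using assms(1) unfolding simple_graph_def by blast
      then have "(u, v) \<in> Or \<or> (v, u) \<in> Or" using orientation_edge[OF or] e by blast
      then show "e \<in> {{u, v} | u v. (u, v) \<in> Or}" using uv by (auto simp: insert_commute)
    qed
  qed
  ultimately show "transitive_orientation E Or"
    using assms(2) unfolding transitive_orientation_def induced_less_def by simp
qed

lemma transitive_orientation_trans:
  assumes "simple_graph V E" "transitive_orientation E Or"
  shows "trans Or"
proof -
  have "acyclic_orientation E Or" using assms(2) unfolding transitive_orientation_def by simp
  then show ?thesis using assms transitive_orientation_iff_no_open_wedges no_open_wedges_trans
    unfolding acyclic_orientation_def by blast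
qed

lemma transitive_triple_unique:
  assumes or: "orientation E Or"
    and arcs: "(a, b) \<in> Or" "(b, c) \<in> Or" "(a, c) \<in> Or" "(a', b') \<in> Or" "(b', c') \<in> Or" "(a', c') \<in> Or"
    and same: "{a, b, c} = {a', b', c'}"
  shows "a = a' \<and> b = b' \<and> c = c'"
proof -
  note asym = orientation_arc(3)[OF or]
  have mem: "a' \<in> {a, b, c}" "b' \<in> {a, b, c}" "c' \<in> {a, b, c}" "a \<in> {a', b', c'}" "b \<in> {a', b', c'}" "c \<in> {a', b', c'}"
    using same by auto
  have "a \<noteq> b" "b \<noteq> c" "a \<noteq> c" "a' \<noteq> b'" "b' \<noteq> c'" "a' \<noteq> c'" using arcs asym by blast+
  then show ?thesis using mem arcs asym by (smt (verit) insertE singletonD)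
qed

lemma closed_wedge_shortcut:
  assumes ao: "acyclic_orientation E Or" and c: "(v, w, w') \<in> closed_wedges E Or"
  shows "(w, w') \<in> Or"
proof -
  have or: "orientation E Or" and acyc: "acyclic Or" using ao unfolding acyclic_orientation_def by auto
  have path: "(w, v) \<in> Or" "(v, w') \<in> Or" and "{w, w'} \<in> E"
    using c unfolding closed_wedges_def by auto
  moreover have "w \<noteq> w'" using path orientation_arc[OF or] by blast
  ultimately have "(w, w') \<in> Or \<or> (w', w) \<in> Or" using orientation_edge[OF or] by blast
  then show ?thesis using acyclic_no_3_cycle[OF acyc path] by blast
qed

lemma closed_wedge_triangle:
  assumes or: "orientation E Or" and c: "(v, w, w') \<in> closed_wedges E Or"
  shows "{w, v, w'} \<in> triangles E"
proof -
  have "(w, v) \<in> Or" "(v, w') \<in> Or" "{w, w'} \<in> E" using c unfolding closed_wedges_def by auto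
  then have "{w, v} \<in> E" "{v, w'} \<in> E" "{w, w'} \<in> E" using orientation_arc(1)[OF or] by auto
  then show ?thesis unfolding triangles_def mem_Collect_eq
    by (intro exI[of _ w] exI[of _ v] exI[of _ w'] conjI) simp_all
qed

text \<open>Every triangle is the vertex set of a closed wedge: of the eight orientations of its
  three edges, the two cyclic ones are excluded and each other one is a transitive path.\<close>
lemma triangle_closed_wedge:
  assumes G: "simple_graph V E" and ao: "acyclic_orientation E Or" and X: "X \<in> triangles E"
  obtains v w w' where "(v, w, w') \<in> closed_wedges E Or" "X = {w, v, w'}"
proof -
  have or: "orientation E Or" and acyc: "acyclic Or" using ao unfolding acyclic_orientation_def by auto
  obtain a b c where X: "X = {a, b, c}" "{a, b} \<in> E" "{b, c} \<in> E" "{a, c} \<in> E"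
    using X unfolding triangles_def by blast
  have edges: "{x, y} \<in> E" if "x \<in> X" "y \<in> X" "x \<noteq> y" for x y
    using that X by (auto simp: insert_commute)
  let ?wedge = "\<exists>v w w'. (v, w, w') \<in> closed_wedges E Or \<and> X = {w, v, w'}"
  have wedge: ?wedge if "(w, v) \<in> Or" "(v, w') \<in> Or" "X = {w, v, w'}" for w v w'
  proof -
    have "w \<noteq> w'" using that(1,2) orientation_arc(3)[OF or] by blast
    then have "{w, w'} \<in> E" using edges[of w w'] that(3) by simp
    then show ?wedge using that unfolding closed_wedges_def by blast
  qed
  have "a \<noteq> b" "b \<noteq> c" "a \<noteq> c" using edge_vertices(3)[OF G] X(2-4) by blast+
  then have "(a, b) \<in> Or \<or> (b, a) \<in> Or" "(b, c) \<in> Or \<or> (c, b) \<in> Or" "(a, c) \<in> Or \<or> (c, a) \<in> Or"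
    using orientation_edge[OF or] X(2-4) by blast+
  then have ?wedge
  proof (elim disjE)
    assume "(a, b) \<in> Or" "(b, c) \<in> Or" "(a, c) \<in> Or"
    then show ?wedge using wedge[of a b c] X(1) by simp
  next
    assume "(a, b) \<in> Or" "(b, c) \<in> Or" "(c, a) \<in> Or"
    then show ?wedge using acyclic_no_3_cycle[OF acyc] by blast
  next
    assume "(a, b) \<in> Or" "(c, b) \<in> Or" "(a, c) \<in> Or"
    then show ?wedge using wedge[of a c b] X(1) by (simp add: insert_commute)
  next
    assume "(a, b) \<in> Or" "(c, b) \<in> Or" "(c, a) \<in> Or"
    then show ?wedge using wedge[of c a b] X(1) by (simp add: insert_commute)
  next
    assume "(b, a) \<in> Or" "(b, c) \<in> Or" "(a, c) \<in> Or"
    then show ?wedge using wedge[of b a c] X(1) by (simp add: insert_commute)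
  next
    assume "(b, a) \<in> Or" "(b, c) \<in> Or" "(c, a) \<in> Or"
    then show ?wedge using wedge[of b c a] X(1) by (simp add: insert_commute)
  next
    assume "(b, a) \<in> Or" "(c, b) \<in> Or" "(a, c) \<in> Or"
    then show ?wedge using acyclic_no_3_cycle[OF acyc] by blast
  next
    assume "(b, a) \<in> Or" "(c, b) \<in> Or" "(c, a) \<in> Or"
    then show ?wedge using wedge[of c b a] X(1) by (simp add: insert_commute)
  qed
  then show thesis using that by blast
qed

lemma card_closed_wedges:
  assumes G: "simple_graph V E" and ao: "acyclic_orientation E Or"
  shows "card (closed_wedges E Or) = card (triangles E)"
proof -
  have or: "orientation E Or" using ao unfolding acyclic_orientation_def by simp
  define vertex_set where "vertex_set = (\<lambda>(v::'a, w::'a, w'::'a). {w, v, w'})"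
  have "inj_on vertex_set (closed_wedges E Or)"
  proof (rule inj_onI)
    fix p q assume p: "p \<in> closed_wedges E Or" and q: "q \<in> closed_wedges E Or"
      and eq: "vertex_set p = vertex_set q"
    obtain v w w' v2 w2 w2' where pq: "p = (v, w, w')" "q = (v2, w2, w2')" by (cases p, cases q)
    have path: "(w, v) \<in> Or" "(v, w') \<in> Or" "(w2, v2) \<in> Or" "(v2, w2') \<in> Or"
      using p q unfolding pq closed_wedges_def by simp_all
    have short: "(w, w') \<in> Or" "(w2, w2') \<in> Or"
      using closed_wedge_shortcut[OF ao] p q unfolding pq by blast+
    have "{w, v, w'} = {w2, v2, w2'}" using eq unfolding pq vertex_set_def by simp
    then have "w = w2 \<and> v = v2 \<and> w' = w2'"
      by (rule transitive_triple_unique[OF or path(1,2) short(1) path(3,4) short(2)])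
    then show "p = q" unfolding pq by simp
  qed
  moreover have "vertex_set ` closed_wedges E Or = triangles E"
  proof
    show "vertex_set ` closed_wedges E Or \<subseteq> triangles E"
      using closed_wedge_triangle[OF or] unfolding vertex_set_def by auto
    show "triangles E \<subseteq> vertex_set ` closed_wedges E Or"
    proof
      fix X assume "X \<in> triangles E"
      then obtain v w w' where "(v, w, w') \<in> closed_wedges E Or" "X = {w, v, w'}"
        by (rule triangle_closed_wedge[OF G ao])
      then show "X \<in> vertex_set ` closed_wedges E Or" unfolding vertex_set_def by force
    qed
  qed
  ultimately show ?thesis by (metis card_image)
qed

abbreviation out_nbrs :: "('a \<times> 'a) set \<Rightarrow> 'a \<Rightarrow> 'a set" where
  "out_nbrs Or v \<equiv> {w. (v, w) \<in> Or}"

abbreviation in_nbrs :: "('a \<times> 'a) set \<Rightarrow> 'a \<Rightarrow> 'a set" where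
  "in_nbrs Or v \<equiv> {w. (w, v) \<in> Or}"

lemma zvertex_square:
  assumes G: "simple_graph V E" and or: "orientation E Or"
  shows "(real_of_int (zvertex Or v))^2
     = real (card {w. {v, w} \<in> E})^2 - 4 * real (card (in_nbrs Or v) * card (out_nbrs Or v))"
proof -
  have nbrs: "out_nbrs Or v \<union> in_nbrs Or v = {w. {v, w} \<in> E}"
  proof (intro equalityI subsetI)
    fix w assume "w \<in> out_nbrs Or v \<union> in_nbrs Or v"
    then have "{v, w} \<in> E \<or> {w, v} \<in> E" using orientation_arc(1)[OF or] by blast
    then show "w \<in> {w. {v, w} \<in> E}" by (simp add: insert_commute)
  next
    fix w assume "w \<in> {w. {v, w} \<in> E}"
    then have "{v, w} \<in> E" by simp
    then show "w \<in> out_nbrs Or v \<union> in_nbrs Or v"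
      using orientation_edge[OF or] edge_vertices(3)[OF G] by blast
  qed
  have "finite {w. {v, w} \<in> E}"
    using edge_vertices(2)[OF G] G unfolding simple_graph_def by (auto intro: finite_subset)
  then have fin: "finite (out_nbrs Or v)" "finite (in_nbrs Or v)" unfolding nbrs[symmetric] by simp_all
  have "out_nbrs Or v \<inter> in_nbrs Or v = {}" using orientation_arc(3)[OF or] by blast
  then have "card (out_nbrs Or v) + card (in_nbrs Or v) = card {w. {v, w} \<in> E}"
    unfolding nbrs[symmetric] using card_Un_disjoint[OF fin] by simp
  then have "real (card (out_nbrs Or v)) + real (card (in_nbrs Or v)) = real (card {w. {v, w} \<in> E})"
    by (metis of_nat_add)
  moreover have "(real_of_int (zvertex Or v))^2 = (real (card (out_nbrs Or v)) + real (card (in_nbrs Or v)))^2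
      - 4 * (real (card (in_nbrs Or v)) * real (card (out_nbrs Or v)))"
    unfolding zvertex_def by (simp add: power2_eq_square algebra_simps)
  ultimately show ?thesis by simp
qed

text \<open>Summing over V, \<open>\<Sum> in\<cdot>out\<close> counts all wedges, open or closed.\<close>
lemma sum_zvertex_squares:
  assumes G: "simple_graph V E" and or: "orientation E Or"
  shows "(\<Sum>v\<in>V. (real_of_int (zvertex Or v))^2)
     = (\<Sum>v\<in>V. real (card {w. {v, w} \<in> E})^2) - 4 * real (card (closed_wedges E Or) + card (open_wedges E Or))"
proof -
  have finV: "finite V" using G unfolding simple_graph_def by simp
  have on_V: "Or \<subseteq> V \<times> V" by (rule orientation_on_V[OF G or])
  have "in_nbrs Or v \<subseteq> V" "out_nbrs Or v \<subseteq> V" for v using on_V by auto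
  then have fin_nbrs: "finite (in_nbrs Or v)" "finite (out_nbrs Or v)" for v
    using finite_subset finV by metis+
  define wedges where "wedges = Sigma V (\<lambda>v. in_nbrs Or v \<times> out_nbrs Or v)"
  have "card wedges = (\<Sum>v\<in>V. card (in_nbrs Or v) * card (out_nbrs Or v))"
    unfolding wedges_def using finV fin_nbrs by (simp add: card_SigmaI card_cartesian_product)
  moreover have "finite wedges" unfolding wedges_def using fin_nbrs finV by (intro finite_SigmaI) simp_all
  moreover have "wedges = closed_wedges E Or \<union> open_wedges E Or"
  proof -
    have "closed_wedges E Or \<union> open_wedges E Or = {(v, w, w'). (w, v) \<in> Or \<and> (v, w') \<in> Or}"
      unfolding closed_wedges_def open_wedges_def by blast
    also have "\<dots> = wedges" unfolding wedges_def using on_V by blast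
    finally show ?thesis by simp
  qed
  moreover have "closed_wedges E Or \<inter> open_wedges E Or = {}"
    unfolding closed_wedges_def open_wedges_def by blast
  ultimately have "card (closed_wedges E Or) + card (open_wedges E Or)
      = (\<Sum>v\<in>V. card (in_nbrs Or v) * card (out_nbrs Or v))"
    using card_Un_disjoint[of "closed_wedges E Or" "open_wedges E Or"] by simp
  then have "real (card (closed_wedges E Or) + card (open_wedges E Or))
      = (\<Sum>v\<in>V. real (card (in_nbrs Or v) * card (out_nbrs Or v)))"
    by (simp only: of_nat_sum)
  then show ?thesis
    unfolding zvertex_square[OF G or] by (simp add: sum_subtractf sum_distrib_left)
qed

lemma znorm_open_wedges:
  assumes "simple_graph V E" "acyclic_orientation E Or"
  shows "znorm V Or = sqrt ((\<Sum>v\<in>V. real (card {w. {v, w} \<in> E})^2)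
            - 4 * real (card (triangles E) + card (open_wedges E Or)))"
proof -
  have "orientation E Or" using assms(2) unfolding acyclic_orientation_def by simp
  show ?thesis
    unfolding znorm_def sum_zvertex_squares[OF assms(1) \<open>orientation E Or\<close>] card_closed_wedges[OF assms] ..
qed

lemma finite_open_wedges:
  assumes "simple_graph V E" "orientation E Or"
  shows "finite (open_wedges E Or)"
proof (rule finite_subset)
  show "open_wedges E Or \<subseteq> V \<times> V \<times> V"
    unfolding open_wedges_def using orientation_on_V[OF assms] by auto
  show "finite (V \<times> V \<times> V)" using assms(1) unfolding simple_graph_def by simp
qed

lemma znorm_le_transitive:
  assumes G: "simple_graph V E" and ao: "acyclic_orientation E Or"
    and T: "transitive_orientation E T"
  shows "znorm V Or \<le> znorm V T"
    and "\<not> transitive_orientation E Or \<Longrightarrow> znorm V Or < znorm V T"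
proof -
  have aoT: "acyclic_orientation E T" using T unfolding transitive_orientation_def by simp
  have "open_wedges E T = {}" using transitive_orientation_iff_no_open_wedges[OF G aoT] T by simp
  then have norm_T: "znorm V T = sqrt ((\<Sum>v\<in>V. real (card {w. {v, w} \<in> E})^2) - 4 * real (card (triangles E)))"
    using znorm_open_wedges[OF G aoT] by simp
  show "znorm V Or \<le> znorm V T"
    unfolding norm_T znorm_open_wedges[OF G ao] by simp
  assume "\<not> transitive_orientation E Or"
  then have "open_wedges E Or \<noteq> {}" using transitive_orientation_iff_no_open_wedges[OF G ao] by simp
  moreover have "finite (open_wedges E Or)"
    using finite_open_wedges[OF G] ao unfolding acyclic_orientation_def by simp
  ultimately have "card (open_wedges E Or) > 0" by (simp add: card_gt_0_iff)
  then show "znorm V Or < znorm V T"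
    unfolding norm_T znorm_open_wedges[OF G ao] by simp
qed

text \<open>The partial order witnessing that G is a comparability graph is itself a transitive
  orientation of G.\<close>
lemma comparability_graph_transitive_orientation:
  assumes "comparability_graph V E"
  obtains T where "transitive_orientation E T"
proof -
  have G: "simple_graph V E" using assms unfolding comparability_graph_def by simp
  obtain R where R: "R \<subseteq> V \<times> V" "irrefl R" "trans R"
    and comparable: "\<And>u v. u \<in> V \<Longrightarrow> v \<in> V \<Longrightarrow> u \<noteq> v \<Longrightarrow> {u, v} \<in> E \<longleftrightarrow> (u, v) \<in> R \<or> (v, u) \<in> R"
    using assms unfolding comparability_graph_def by blast
  have asym: "(u, v) \<in> R \<Longrightarrow> (v, u) \<notin> R" for u v
    using R(2,3) unfolding irrefl_def trans_def by blast
  have arcs: "{u, v} \<in> E \<and> u \<noteq> v" if "(u, v) \<in> R" for u v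
    using that R(1,2) comparable unfolding irrefl_def by blast
  have "orientation E R"
    unfolding orientation_def using arcs asym comparable edge_vertices[OF G] by blast
  moreover have "acyclic R" using R(2,3) by (simp add: acyclic_irrefl)
  ultimately have "acyclic_orientation E R" unfolding acyclic_orientation_def by simp
  moreover have "open_wedges E R = {}"
    unfolding open_wedges_def using arcs R(3) by (auto dest: transD)
  ultimately show thesis
    using that transitive_orientation_iff_no_open_wedges[OF G] by blast
qed

lemma finite_acyclic_orientations:
  assumes "simple_graph V E"
  shows "finite {Or. acyclic_orientation E Or}"
proof (rule finite_subset)
  show "{Or. acyclic_orientation E Or} \<subseteq> Pow (V \<times> V)"
    using orientation_on_V[OF assms] unfolding acyclic_orientation_def by blast
  show "finite (Pow (V \<times> V))" using assms unfolding simple_graph_def by simp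
qed

text \<open>Against a transitive orientation T, any acyclic orientation Or has fewer comparable
  pairs: every T-comparable pair is an edge, hence Or-comparable. If Or is not transitive,
  an open wedge of Or gives an Or-comparable pair that is not an edge.\<close>
lemma num_linext_le_transitive:
  assumes G: "simple_graph V E" and ao: "acyclic_orientation E Or"
    and T: "transitive_orientation E T"
  shows "num_linext V Or \<le> num_linext V T"
    and "\<not> transitive_orientation E Or \<Longrightarrow> num_linext V Or < num_linext V T"
proof -
  have aoT: "acyclic_orientation E T" using T unfolding transitive_orientation_def by simp
  have or: "orientation E Or" and orT: "orientation E T"
    using ao aoT unfolding acyclic_orientation_def by auto
  have T_closed: "T\<^sup>+ = T" using transitive_orientation_trans[OF G T] by (rule trancl_id)
  have T_edge: "{x, y} \<in> E" if "(x, y) \<in> T\<^sup>+" for x y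
    using that orientation_arc(1)[OF orT] T_closed by simp
  have "comparability_subgraph V (Or\<^sup>+) (T\<^sup>+)"
  proof (intro comparability_subgraph.intro comparability_subgraph_axioms.intro)
    show "finite_strict_order V (Or\<^sup>+)" "finite_strict_order V (T\<^sup>+)"
      using acyclic_orientation_strict_order[OF G] ao aoT by blast+
    fix x y assume "(x, y) \<in> T\<^sup>+"
    moreover have "x \<noteq> y" using calculation orientation_arc(2)[OF orT] T_closed by simp
    ultimately have "(x, y) \<in> Or \<or> (y, x) \<in> Or" using orientation_edge[OF or] T_edge by blast
    then show "(x, y) \<in> Or\<^sup>+ \<or> (y, x) \<in> Or\<^sup>+" by blast
  qed
  then interpret comparability_subgraph V "Or\<^sup>+" "T\<^sup>+" .
  have num_linext_closure: "num_linext V R = card (linear_extensions V (R\<^sup>+))" for R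
    unfolding num_linext_def linear_extensions_def induced_less_def by simp
  show "num_linext V Or \<le> num_linext V T"
    unfolding num_linext_closure by (rule card_linear_extensions_le)
  assume "\<not> transitive_orientation E Or"
  then obtain v w w' where path: "(w, v) \<in> Or" "(v, w') \<in> Or" and non_edge: "{w, w'} \<notin> E"
    using transitive_orientation_iff_no_open_wedges[OF G ao] unfolding open_wedges_def by auto
  have "(w, w') \<in> Or\<^sup>+" using path by (meson trancl.r_into_trancl trancl_into_trancl)
  moreover have "(w, w') \<notin> T\<^sup>+" "(w', w) \<notin> T\<^sup>+"
    using T_edge[of w w'] T_edge[of w' w] non_edge by (auto simp: insert_commute)
  ultimately show "num_linext V Or < num_linext V T"
    unfolding num_linext_closure by (rule card_linear_extensions_less)
qed

lemma maximizers_characterization: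
  fixes f :: "'a \<Rightarrow> 'b :: linorder"
  assumes "m \<in> M" "M \<subseteq> S" "x \<in> S"
    and le: "\<And>y z. y \<in> S \<Longrightarrow> z \<in> M \<Longrightarrow> f y \<le> f z"
    and less: "\<And>y z. y \<in> S - M \<Longrightarrow> z \<in> M \<Longrightarrow> f y < f z"
  shows "(\<forall>y\<in>S. f y \<le> f x) \<longleftrightarrow> x \<in> M"
  using assms by (meson DiffI le less not_less subsetD)

theorem theorem5p3:
  fixes V :: "'a set" and E :: "'a set set" and Or :: "('a \<times> 'a) set"
  assumes "comparability_graph V E"
    and "acyclic_orientation E Or"
  shows "((\<forall>Or'. acyclic_orientation E Or' \<longrightarrow> znorm V Or' \<le> znorm V Or)
            \<longleftrightarrow> transitive_orientation E Or)
       \<and> (transitive_orientation E Or \<longleftrightarrow> num_linext V Or = eps V E)"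
proof -
  have G: "simple_graph V E" using assms(1) unfolding comparability_graph_def by simp
  obtain T where T: "transitive_orientation E T"
    using comparability_graph_transitive_orientation[OF assms(1)] .
  let ?S = "{Or. acyclic_orientation E Or}" and ?M = "{Or. transitive_orientation E Or}"
  have M_S: "T \<in> ?M" "?M \<subseteq> ?S" "Or \<in> ?S"
    using T assms(2) unfolding transitive_orientation_def by auto
  have "(\<forall>Or'\<in>?S. znorm V Or' \<le> znorm V Or) \<longleftrightarrow> Or \<in> ?M"
    using znorm_le_transitive[OF G] by (intro maximizers_characterization[OF M_S]) auto
  moreover have "(\<forall>Or'\<in>?S. num_linext V Or' \<le> num_linext V Or) \<longleftrightarrow> Or \<in> ?M"
    using num_linext_le_transitive[OF G] by (intro maximizers_characterization[OF M_S]) auto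
  moreover have "num_linext V Or = eps V E \<longleftrightarrow> (\<forall>Or'\<in>?S. num_linext V Or' \<le> num_linext V Or)"
    unfolding eps_def setcompr_eq_image
    using finite_acyclic_orientations[OF G] M_S(3) by (subst eq_commute, subst Max_eq_iff) auto
  ultimately show ?thesis by auto
qed

end
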